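(* For every finite graph $G$ with at least one edge and every positive integer $r$, \[ \mathrm{scol}_r(G)\le \biggl(3+\mathrm{tww}(G)\sum_{i=0}^{r-1}(\mathrm{tww}(G)-1)^{i}\biggr)\,\bar\omega(G)\le \bigl(\mathrm{tww}(G)^r+3\bigr)\,\bar\omega(G), \] with the convention $0^0=1$.
   Context: $\bar\omega(G)$ denotes the maximum integer $s$ such that the complete bipartite graph $K_{s,s}$ is a subgraph of $G$. Twin-width: a trigraph is a vertex set together with two disjoint sets of edges, black and red. Contracting two vertices $x,y$ of a trigraph produces a trigraph in which $x,y$ are replaced by a new vertex $z$ adjacent to every other vertex $w$ adjacent (by any edge) to $x$ or to $y$; the edge $zw$ is black if $xw$ and $yw$ are both black edges, and red otherwise; all other edges are unchanged. A $d$-contraction sequence of an $n$-vertex graph $G$ is a sequence of trigraphs $\mathbf G_n,\dots,\mathbf G_1$ where $\mathbf G_n$ is $G$ with all edges black, each $\mathbf G_i$ is obtained from $\mathbf G_{i+1}$ by one contraction, $\mathbf G_1$ has a single vertex, and every vertex of every $\mathbf G_i$ is incident to at most $d$ red edges. The twin-width $\mathrm{tww}(G)$ is the minimum $d$ for which $G$ has a $d$-contraction sequence. Strong colouring number: for a linear order $L$ of $V(G)$, a vertex $u$ is strongly $r$-reachable from $v$ if there is a path of length at most $r$ between $u$ and $v$ with $u\le_L v$ and all inner vertices $w$ satisfying $v<_L w$; $\mathrm{Sreach}_r[L,v]$ is the set of such $u$ (including $v$), and $\mathrm{scol}_r(G)=\min_L\max_{v}|\mathrm{Sreach}_r[L,v]|$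 over linear orders $L$ of $V(G)$. *)

theory Defs
  imports Main
begin

definition graph :: "'a set \<Rightarrow> 'a set set \<Rightarrow> bool" where
  "graph V E \<longleftrightarrow> finite V \<and> (\<forall>e\<in>E. \<exists>u v. e = {u, v} \<and> u \<noteq> v \<and> u \<in> V \<and> v \<in> V)"

definition biclique_num :: "'a set \<Rightarrow> 'a set set \<Rightarrow> nat" where
  "biclique_num V E = (GREATEST s. \<exists>A B. A \<subseteq> V \<and> B \<subseteq> V \<and> A \<inter> B = {} \<and>
      card A = s \<and> card B = s \<and> (\<forall>a\<in>A. \<forall>b\<in>B. {a, b} \<in> E))"

text \<open>The vertices of the
  trigraphs in a contraction sequence of G are represented as sets of vertices of G; the new
  vertex z created by contracting x and y is represented by x \<union> y.\<close>

type_synonym 'a trigraph = "'a set set \<times> 'a set set set \<times> 'a set set set"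

definition tvert :: "'a trigraph \<Rightarrow> 'a set set" where "tvert T = fst T"
definition tblack :: "'a trigraph \<Rightarrow> 'a set set set" where "tblack T = fst (snd T)"
definition tred :: "'a trigraph \<Rightarrow> 'a set set set" where "tred T = snd (snd T)"

definition contract :: "'a trigraph \<Rightarrow> 'a set \<Rightarrow> 'a set \<Rightarrow> 'a trigraph" where
  "contract T x y =
    (let P = tvert T; B = tblack T; R = tred T; z = x \<union> y; W = P - {x, y} in
     (insert z W,
      {e \<in> B. x \<notin> e \<and> y \<notin> e} \<union>
        {{z, w} | w. w \<in> W \<and> {x, w} \<in> B \<and> {y, w} \<in> B},
      {e \<in> R. x \<notin> e \<and> y \<notin> e} \<union>
        {{z, w} | w. w \<in> W \<and> ({x, w} \<in> B \<union> R \<or> {y, w} \<in> B \<union> R)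
                     \<and> \<not> ({x, w} \<in> B \<and> {y, w} \<in> B)}))"

definition red_deg :: "'a trigraph \<Rightarrow> 'a set \<Rightarrow> nat" where
  "red_deg T v = card {e \<in> tred T. v \<in> e}"

definition initial_trigraph :: "'a set \<Rightarrow> 'a set set \<Rightarrow> 'a trigraph" where
  "initial_trigraph V E = ((\<lambda>v. {v}) ` V, {{{u}, {v}} | u v. {u, v} \<in> E}, {})"

text \<open>A d-contraction sequence, listed as G_n, G_{n-1}, ..., G_1.\<close>
definition contraction_seq :: "'a set \<Rightarrow> 'a set set \<Rightarrow> nat \<Rightarrow> 'a trigraph list \<Rightarrow> bool" where
  "contraction_seq V E d S \<longleftrightarrow>
     S \<noteq> [] \<and> S ! 0 = initial_trigraph V E \<and>
     (\<forall>k. Suc k < length S \<longrightarrow>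
        (\<exists>x y. x \<in> tvert (S ! k) \<and> y \<in> tvert (S ! k) \<and> x \<noteq> y \<and>
               S ! Suc k = contract (S ! k) x y)) \<and>
     card (tvert (last S)) = 1 \<and>
     (\<forall>T \<in> set S. \<forall>v \<in> tvert T. red_deg T v \<le> d)"

definition tww :: "'a set \<Rightarrow> 'a set set \<Rightarrow> nat" where
  "tww V E = (LEAST d. \<exists>S. contraction_seq V E d S)"

definition linord :: "'a set \<Rightarrow> 'a list \<Rightarrow> bool" where
  "linord V L \<longleftrightarrow> distinct L \<and> set L = V"

definition ord_le :: "'a list \<Rightarrow> 'a \<Rightarrow> 'a \<Rightarrow> bool" where
  "ord_le L u v \<longleftrightarrow> (\<exists>i j. i \<le> j \<and> j < length L \<and> L ! i = u \<and> L ! j = v)"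

definition ord_less :: "'a list \<Rightarrow> 'a \<Rightarrow> 'a \<Rightarrow> bool" where
  "ord_less L u v \<longleftrightarrow> (\<exists>i j. i < j \<and> j < length L \<and> L ! i = u \<and> L ! j = v)"

text \<open>A path given as its vertex list (distinct vertices, consecutive ones adjacent);
  its length is the number of edges.\<close>
definition is_path :: "'a set \<Rightarrow> 'a set set \<Rightarrow> 'a list \<Rightarrow> bool" where
  "is_path V E ps \<longleftrightarrow> ps \<noteq> [] \<and> distinct ps \<and> set ps \<subseteq> V \<and>
     (\<forall>i. Suc i < length ps \<longrightarrow> {ps ! i, ps ! Suc i} \<in> E)"

definition Sreach :: "'a set \<Rightarrow> 'a set set \<Rightarrow> nat \<Rightarrow> 'a list \<Rightarrow> 'a \<Rightarrow> 'a set" where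
  "Sreach V E r L v = {u \<in> V. ord_le L u v \<and>
     (\<exists>ps. is_path V E ps \<and> hd ps = v \<and> last ps = u \<and> length ps - 1 \<le> r \<and>
          (\<forall>i. 0 < i \<and> i < length ps - 1 \<longrightarrow> ord_less L v (ps ! i)))}"

definition scol :: "'a set \<Rightarrow> 'a set set \<Rightarrow> nat \<Rightarrow> nat" where
  "scol V E r = Min {Max ((\<lambda>v. card (Sreach V E r L v)) ` V) | L. linord V L}"

end

theory Submission
  imports Defs
begin

text \<open>Fix a contraction sequence of width d and let s be the biclique number of G. A black
  edge joins two parts that are completely adjacent in G, so a part with more than s vertices
  (a large part) has at most s vertices in its black neighbourhood, and no black edge joins two
  large parts. Order the vertices by decreasing time at which their part becomes large, and let
  T be the trigraph in which the part z of v becomes large. A vertex strongly r-reachable from v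
  either became large at the same time as v, and then lies in one of the two small parts
  contracted at that step, or it ends a path whose earlier vertices lie in large parts of T.
  Such a path runs along red edges of T, so its end lies in a part at red distance at most r
  from z or in the black neighbourhood of such a part. The red ball of radius r around z has
  at most 1 + d ((d - 1)^0 + ... + (d - 1)^(r - 1)) parts, each accounting for at most s
  vertices.\<close>

section \<open>Trigraphs representing a graph\<close>

definition complete_between :: "'a set set \<Rightarrow> 'a set \<Rightarrow> 'a set \<Rightarrow> bool" where
  "complete_between E P Q \<longleftrightarrow> (\<forall>a\<in>P. \<forall>b\<in>Q. {a, b} \<in> E)"

definition adjacent_between :: "'a set set \<Rightarrow> 'a set \<Rightarrow> 'a set \<Rightarrow> bool" where
  "adjacent_between E P Q \<longleftrightarrow> (\<exists>a\<in>P. \<exists>b\<in>Q. {a, b} \<in> E)"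

lemma complete_between_sym: "complete_between E P Q \<Longrightarrow> complete_between E Q P"
  unfolding complete_between_def by (metis insert_commute)

lemma adjacent_between_sym: "adjacent_between E P Q \<Longrightarrow> adjacent_between E Q P"
  unfolding adjacent_between_def by (metis insert_commute)

definition represents :: "'a set \<Rightarrow> 'a set set \<Rightarrow> 'a trigraph \<Rightarrow> bool" where
  "represents V E T \<longleftrightarrow>
     (\<forall>P\<in>tvert T. P \<noteq> {} \<and> P \<subseteq> V) \<and>
     (\<forall>P\<in>tvert T. \<forall>Q\<in>tvert T. P \<noteq> Q \<longrightarrow> P \<inter> Q = {}) \<and> \<Union>(tvert T) = V \<and>
     tblack T \<union> tred T \<subseteq> {{P, Q} | P Q. P \<in> tvert T \<and> Q \<in> tvert T \<and> P \<noteq> Q} \<and>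
     (\<forall>P Q. {P, Q} \<in> tblack T \<longrightarrow> complete_between E P Q) \<and>
     (\<forall>P\<in>tvert T. \<forall>Q\<in>tvert T. P \<noteq> Q \<longrightarrow> adjacent_between E P Q \<longrightarrow> {P, Q} \<in> tblack T \<union> tred T)"

lemma
  assumes "represents V E T"
  shows represents_part: "P \<in> tvert T \<Longrightarrow> P \<noteq> {} \<and> P \<subseteq> V"
    and represents_disjoint: "P \<in> tvert T \<Longrightarrow> Q \<in> tvert T \<Longrightarrow> P \<noteq> Q \<Longrightarrow> P \<inter> Q = {}"
    and represents_Union: "\<Union>(tvert T) = V"
    and represents_edges: "tblack T \<union> tred T \<subseteq> {{P, Q} | P Q. P \<in> tvert T \<and> Q \<in> tvert T \<and> P \<noteq> Q}"
    and represents_black_complete: "{P, Q} \<in> tblack T \<Longrightarrow> complete_between E P Q"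
    and represents_adjacent: "P \<in> tvert T \<Longrightarrow> Q \<in> tvert T \<Longrightarrow> P \<noteq> Q \<Longrightarrow> adjacent_between E P Q
      \<Longrightarrow> {P, Q} \<in> tblack T \<union> tred T"
  using assms unfolding represents_def by simp_all

lemma represents_edgeE:
  assumes "represents V E T" "e \<in> tblack T \<union> tred T"
  obtains P Q where "e = {P, Q}" "P \<in> tvert T" "Q \<in> tvert T" "P \<noteq> Q"
proof -
  have "e \<in> {{P, Q} | P Q. P \<in> tvert T \<and> Q \<in> tvert T \<and> P \<noteq> Q}"
    using represents_edges[OF assms(1)] assms(2) by (rule subsetD)
  then show ?thesis using that by blast
qed

lemma represents_edgeD:
  assumes "represents V E T" "{P, Q} \<in> tblack T \<union> tred T"
  shows "P \<in> tvert T \<and> Q \<in> tvert T \<and> P \<noteq> Q"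
  using represents_edges[OF assms(1)] assms(2) by (auto simp: doubleton_eq_iff)

lemma represents_initial:
  assumes "graph V E"
  shows "represents V E (initial_trigraph V E)"
proof -
  have E: "u \<noteq> v \<and> u \<in> V \<and> v \<in> V" if "{u, v} \<in> E" for u v
    using assms that unfolding graph_def by (metis doubleton_eq_iff)
  have parts: "tvert (initial_trigraph V E) = (\<lambda>v. {v}) ` V"
    and black: "tblack (initial_trigraph V E) = {{{u}, {v}} | u v. {u, v} \<in> E}"
    and red: "tred (initial_trigraph V E) = {}"
    by (simp_all add: initial_trigraph_def tvert_def tblack_def tred_def)
  have edges: "tblack (initial_trigraph V E) \<union> tred (initial_trigraph V E) \<subseteq>
      {{P, Q} | P Q. P \<in> tvert (initial_trigraph V E) \<and> Q \<in> tvert (initial_trigraph V E) \<and> P \<noteq> Q}"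
  proof
    fix e assume "e \<in> tblack (initial_trigraph V E) \<union> tred (initial_trigraph V E)"
    then obtain u v where "e = {{u}, {v}}" "{u, v} \<in> E" unfolding black red by blast
    with E[of u v] show "e \<in> {{P, Q} | P Q. P \<in> tvert (initial_trigraph V E) \<and>
        Q \<in> tvert (initial_trigraph V E) \<and> P \<noteq> Q}"
      unfolding parts by blast
  qed
  have complete: "complete_between E P Q" if PQ: "{P, Q} \<in> tblack (initial_trigraph V E)" for P Q
  proof -
    obtain u v where "{P, Q} = {{u}, {v}}" "{u, v} \<in> E" using PQ unfolding black by blast
    then show ?thesis unfolding complete_between_def doubleton_eq_iff
      by (auto simp: insert_commute)
  qed
  have adjacent: "{P, Q} \<in> tblack (initial_trigraph V E)"
    if PQ: "P \<in> tvert (initial_trigraph V E)" "Q \<in> tvert (initial_trigraph V E)"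
      and adj: "adjacent_between E P Q" for P Q
  proof -
    obtain u v where "P = {u}" "Q = {v}" using PQ unfolding parts by blast
    with adj show ?thesis unfolding black adjacent_between_def by blast
  qed
  show ?thesis
    unfolding represents_def using parts edges complete adjacent by simp
qed

lemma contract_simps:
  "tvert (contract T x y) = insert (x \<union> y) (tvert T - {x, y})"
  "tblack (contract T x y) = {e \<in> tblack T. x \<notin> e \<and> y \<notin> e} \<union>
     {{x \<union> y, w} | w. w \<in> tvert T - {x, y} \<and> {x, w} \<in> tblack T \<and> {y, w} \<in> tblack T}"
  "tred (contract T x y) = {e \<in> tred T. x \<notin> e \<and> y \<notin> e} \<union>
     {{x \<union> y, w} | w. w \<in> tvert T - {x, y} \<and>
        ({x, w} \<in> tblack T \<union> tred T \<or> {y, w} \<in> tblack T \<union> tred T) \<and>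
        \<not> ({x, w} \<in> tblack T \<and> {y, w} \<in> tblack T)}"
  by (simp_all add: contract_def Let_def tvert_def tblack_def tred_def)

lemma contract_edgeE:
  assumes "e \<in> tblack (contract T x y) \<union> tred (contract T x y)"
  obtains "e \<in> tblack T \<union> tred T" "x \<notin> e" "y \<notin> e"
    | w where "e = {x \<union> y, w}" "w \<in> tvert T - {x, y}"
  using assms unfolding contract_simps(2,3) by blast

lemma represents_contract:
  assumes T: "represents V E T" and x: "x \<in> tvert T" and y: "y \<in> tvert T" and "x \<noteq> y"
  shows "represents V E (contract T x y)"
proof -
  let ?z = "x \<union> y" and ?W = "tvert T - {x, y}"
  have W_disjoint: "w \<inter> ?z = {} \<and> w \<noteq> ?z" if "w \<in> ?W" for w
    using that represents_disjoint[OF T, of w] represents_part[OF T, of w] x y by auto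
  have black_z: "complete_between E ?z w" if "{x, w} \<in> tblack T" "{y, w} \<in> tblack T" for w
    using that represents_black_complete[OF T] unfolding complete_between_def by blast
  have adjacent_z: "{?z, w} \<in> tblack (contract T x y) \<union> tred (contract T x y)"
    if "w \<in> ?W" "adjacent_between E ?z w" for w
  proof -
    have "adjacent_between E x w \<or> adjacent_between E y w"
      using that(2) unfolding adjacent_between_def by blast
    then have "{x, w} \<in> tblack T \<union> tred T \<or> {y, w} \<in> tblack T \<union> tred T"
      using represents_adjacent[OF T] that(1) x y by blast
    then show ?thesis using that(1) unfolding contract_simps by blast
  qed
  have parts: "\<forall>P\<in>tvert (contract T x y). P \<noteq> {} \<and> P \<subseteq> V"
    using represents_part[OF T] x y unfolding contract_simps by blast
  have disjoint: "\<forall>P\<in>tvert (contract T x y). \<forall>Q\<in>tvert (contract T x y). P \<noteq> Q \<longrightarrow> P \<inter> Q = {}"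
    using W_disjoint represents_disjoint[OF T] unfolding contract_simps by blast
  have Union: "\<Union>(tvert (contract T x y)) = V"
    using represents_Union[OF T] x y unfolding contract_simps by blast
  have edges: "tblack (contract T x y) \<union> tred (contract T x y) \<subseteq>
      {{P, Q} | P Q. P \<in> tvert (contract T x y) \<and> Q \<in> tvert (contract T x y) \<and> P \<noteq> Q}"
  proof
    fix e assume "e \<in> tblack (contract T x y) \<union> tred (contract T x y)"
    then show "e \<in> {{P, Q} | P Q. P \<in> tvert (contract T x y) \<and> Q \<in> tvert (contract T x y) \<and> P \<noteq> Q}"
    proof (cases rule: contract_edgeE)
      case 1
      then obtain P Q where "e = {P, Q}" "P \<in> tvert T" "Q \<in> tvert T" "P \<noteq> Q"
        using represents_edgeE[OF T] by metis
      with 1 show ?thesis unfolding contract_simps(1) by blast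
    next
      case (2 w)
      with W_disjoint[of w] show ?thesis unfolding contract_simps(1) by blast
    qed
  qed
  have complete: "\<forall>P Q. {P, Q} \<in> tblack (contract T x y) \<longrightarrow> complete_between E P Q"
  proof (intro allI impI)
    fix P Q assume "{P, Q} \<in> tblack (contract T x y)"
    then consider "{P, Q} \<in> tblack T"
      | w where "{P, Q} = {?z, w}" "{x, w} \<in> tblack T" "{y, w} \<in> tblack T"
      unfolding contract_simps by blast
    then show "complete_between E P Q"
    proof cases
      case 1
      then show ?thesis by (rule represents_black_complete[OF T])
    next
      case (2 w)
      then show ?thesis using black_z complete_between_sym by (metis doubleton_eq_iff)
    qed
  qed
  have adjacent: "\<forall>P\<in>tvert (contract T x y). \<forall>Q\<in>tvert (contract T x y). P \<noteq> Q \<longrightarrow>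
      adjacent_between E P Q \<longrightarrow> {P, Q} \<in> tblack (contract T x y) \<union> tred (contract T x y)"
  proof (intro ballI impI)
    fix P Q assume P: "P \<in> tvert (contract T x y)" and Q: "Q \<in> tvert (contract T x y)"
      and "P \<noteq> Q" and adj: "adjacent_between E P Q"
    show "{P, Q} \<in> tblack (contract T x y) \<union> tred (contract T x y)"
    proof (cases "P = ?z")
      case True
      then show ?thesis using Q \<open>P \<noteq> Q\<close> adj adjacent_z unfolding contract_simps(1) by simp
    next
      case P_not_z: False
      show ?thesis
      proof (cases "Q = ?z")
        case True
        then have "{Q, P} \<in> tblack (contract T x y) \<union> tred (contract T x y)"
          using P P_not_z adjacent_z adjacent_between_sym[OF adj]
          unfolding contract_simps(1) by simp
        then show ?thesis by (simp add: insert_commute)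
      next
        case False
        then have "P \<in> ?W" "Q \<in> ?W" using P Q P_not_z unfolding contract_simps by auto
        moreover from this have "{P, Q} \<in> tblack T \<union> tred T"
          using represents_adjacent[OF T] \<open>P \<noteq> Q\<close> adj by blast
        ultimately show ?thesis unfolding contract_simps by blast
      qed
    qed
  qed
  show ?thesis
    unfolding represents_def using parts disjoint Union edges complete adjacent by blast
qed

lemma represents_finite:
  assumes "represents V E T" "finite V"
  shows finite_tvert: "finite (tvert T)" and finite_tred: "finite (tred T)"
proof -
  have "tvert T \<subseteq> Pow V" using represents_part[OF assms(1)] by blast
  then show "finite (tvert T)" using assms(2) finite_subset by blast
  have "tred T \<subseteq> Pow (tvert T)"
    using represents_edges[OF assms(1)] by blast
  then show "finite (tred T)" using \<open>finite (tvert T)\<close> finite_subset by blast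
qed

definition part_of :: "'a trigraph \<Rightarrow> 'a \<Rightarrow> 'a set" where
  "part_of T v = (THE P. P \<in> tvert T \<and> v \<in> P)"

lemma part_of_eq:
  assumes "represents V E T" "P \<in> tvert T" "v \<in> P"
  shows "part_of T v = P"
  unfolding part_of_def
proof (rule the_equality)
  show "P \<in> tvert T \<and> v \<in> P" using assms(2,3) ..
  show "Q = P" if "Q \<in> tvert T \<and> v \<in> Q" for Q
    using that assms represents_disjoint[OF assms(1), of Q P] by blast
qed

lemma
  assumes "represents V E T" "v \<in> V"
  shows part_of_in_tvert: "part_of T v \<in> tvert T" and in_part_of: "v \<in> part_of T v"
proof -
  obtain P where "P \<in> tvert T" "v \<in> P" using represents_Union[OF assms(1)] assms(2) by blast
  then show "part_of T v \<in> tvert T" "v \<in> part_of T v" using part_of_eq[OF assms(1)] by simp_all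
qed

lemma part_of_contract:
  assumes "represents V E T" "x \<in> tvert T" "y \<in> tvert T" "x \<noteq> y" "v \<in> V"
  shows "part_of (contract T x y) v = (if part_of T v \<in> {x, y} then x \<union> y else part_of T v)"
proof -
  have T': "represents V E (contract T x y)" by (rule represents_contract[OF assms(1-4)])
  have P: "part_of T v \<in> tvert T" "v \<in> part_of T v"
    using part_of_in_tvert[OF assms(1,5)] in_part_of[OF assms(1,5)] by simp_all
  show ?thesis
  proof (cases "part_of T v \<in> {x, y}")
    case True
    then have "v \<in> x \<union> y" using P(2) by blast
    then show ?thesis
      using part_of_eq[OF T', of "x \<union> y" v] True unfolding contract_simps(1) by simp
  next
    case False
    then show ?thesis
      using part_of_eq[OF T', of "part_of T v" v] P unfolding contract_simps(1) by simp
  qed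
qed

definition contraction_chain :: "'a trigraph list \<Rightarrow> bool" where
  "contraction_chain S \<longleftrightarrow> (\<forall>k. Suc k < length S \<longrightarrow>
     (\<exists>x y. x \<in> tvert (S ! k) \<and> y \<in> tvert (S ! k) \<and> x \<noteq> y \<and> S ! Suc k = contract (S ! k) x y))"

lemma contraction_seq_iff:
  "contraction_seq V E d S \<longleftrightarrow> S \<noteq> [] \<and> S ! 0 = initial_trigraph V E \<and> contraction_chain S \<and>
     card (tvert (last S)) = 1 \<and> (\<forall>T \<in> set S. \<forall>v \<in> tvert T. red_deg T v \<le> d)"
  unfolding contraction_seq_def contraction_chain_def ..

lemma contraction_chain_Cons:
  assumes "x \<in> tvert T" "y \<in> tvert T" "x \<noteq> y" "contraction_chain S" "S \<noteq> []" "hd S = contract T x y"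
  shows "contraction_chain (T # S)"
  unfolding contraction_chain_def
proof (intro allI impI)
  fix k assume "Suc k < length (T # S)"
  then show "\<exists>x y. x \<in> tvert ((T # S) ! k) \<and> y \<in> tvert ((T # S) ! k) \<and> x \<noteq> y \<and>
      (T # S) ! Suc k = contract ((T # S) ! k) x y"
    using assms unfolding contraction_chain_def by (cases k) (auto simp: hd_conv_nth)
qed

lemma card_tvert_contract:
  assumes "represents V E T" "finite V" "x \<in> tvert T" "y \<in> tvert T" "x \<noteq> y"
  shows "card (tvert (contract T x y)) = card (tvert T) - 1"
proof -
  have "x \<union> y \<notin> tvert T - {x, y}"
    using represents_disjoint[OF assms(1), of "x \<union> y" x] represents_part[OF assms(1) assms(3)]
      assms(3) by auto
  moreover have "card {x, y} \<le> card (tvert T)"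
    using finite_tvert[OF assms(1,2)] assms(3,4) by (intro card_mono) auto
  ultimately show ?thesis
    using finite_tvert[OF assms(1,2)] assms(3-5) by (simp add: contract_simps(1) card_Diff_subset)
qed

lemma contraction_chain_exists:
  assumes "finite V" "represents V E T" "card (tvert T) = Suc n"
  shows "\<exists>S. S \<noteq> [] \<and> hd S = T \<and> contraction_chain S \<and> card (tvert (last S)) = 1 \<and>
    (\<forall>T'\<in>set S. represents V E T')"
  using assms(2,3)
proof (induction n arbitrary: T)
  case 0
  then show ?case by (intro exI[of _ "[T]"]) (simp add: contraction_chain_def)
next
  case (Suc n)
  have "finite (tvert T)" "\<not> card (tvert T) \<le> Suc 0"
    using Suc.prems(2) card.infinite by fastforce+
  then obtain x y where xy: "x \<in> tvert T" "y \<in> tvert T" "x \<noteq> y"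
    using card_le_Suc0_iff_eq by blast
  have T': "represents V E (contract T x y)" by (rule represents_contract[OF Suc.prems(1) xy])
  have "card (tvert (contract T x y)) = Suc n"
    using card_tvert_contract[OF Suc.prems(1) assms(1) xy] Suc.prems(2) by simp
  then obtain S where "S \<noteq> []" "hd S = contract T x y" "contraction_chain S"
    "card (tvert (last S)) = 1" "\<forall>T'\<in>set S. represents V E T'"
    using Suc.IH[OF T'] by blast
  then show ?case
    using contraction_chain_Cons[OF xy] Suc.prems(1) by (intro exI[of _ "T # S"]) auto
qed

lemma red_deg_le_card:
  assumes "represents V E T" "finite V"
  shows "red_deg T v \<le> card (tred T)"
  unfolding red_deg_def using finite_tred[OF assms] by (intro card_mono) auto

lemma tww_contraction_seq:
  assumes "graph V E" "V \<noteq> {}"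
  shows "\<exists>S. contraction_seq V E (tww V E) S"
proof -
  have fin: "finite V" using assms(1) unfolding graph_def by simp
  have T0: "represents V E (initial_trigraph V E)" using represents_initial[OF assms(1)] .
  have "card (tvert (initial_trigraph V E)) = Suc (card V - 1)"
    using assms(2) fin by (simp add: initial_trigraph_def tvert_def card_image card_gt_0_iff)
  then obtain S where S: "S \<noteq> []" "hd S = initial_trigraph V E" "contraction_chain S"
      "card (tvert (last S)) = 1" "\<forall>T\<in>set S. represents V E T"
    using contraction_chain_exists[OF fin T0] by blast
  define d where "d = Max ((\<lambda>T. card (tred T)) ` set S)"
  have "red_deg T v \<le> d" if "T \<in> set S" for T v
  proof -
    have "card (tred T) \<le> d" unfolding d_def using that by (intro Max_ge) auto
    then show ?thesis using red_deg_le_card[of V E T v] S(5) that fin by fastforce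
  qed
  then have "contraction_seq V E d S"
    unfolding contraction_seq_iff using S by (simp add: hd_conv_nth)
  then have "\<exists>d S. contraction_seq V E d S" by blast
  then show ?thesis unfolding tww_def by (rule LeastI_ex)
qed

lemma biclique_size_le_card:
  assumes "finite V" "\<exists>A B. A \<subseteq> V \<and> B \<subseteq> V \<and> A \<inter> B = {} \<and> card A = k \<and> card B = k \<and>
      (\<forall>a\<in>A. \<forall>b\<in>B. {a, b} \<in> E)"
  shows "k \<le> card V"
proof -
  obtain A where "A \<subseteq> V" "card A = k" using assms(2) by blast
  then show ?thesis using card_mono[OF assms(1)] by blast
qed

lemma biclique_num_ge:
  assumes "finite V" "A \<subseteq> V" "B \<subseteq> V" "A \<inter> B = {}" "card A = m" "card B = m"
    and "complete_between E A B"
  shows "m \<le> biclique_num V E"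
  unfolding biclique_num_def
proof (rule Greatest_le_nat[where b = "card V"])
  show "\<exists>A B. A \<subseteq> V \<and> B \<subseteq> V \<and> A \<inter> B = {} \<and> card A = m \<and> card B = m \<and> (\<forall>a\<in>A. \<forall>b\<in>B. {a, b} \<in> E)"
    using assms unfolding complete_between_def by blast
qed (rule biclique_size_le_card[OF assms(1)])

lemma biclique_num_witness:
  assumes "finite V"
  obtains A B where "A \<subseteq> V" "B \<subseteq> V" "A \<inter> B = {}"
    "card A = biclique_num V E" "card B = biclique_num V E" "complete_between E A B"
proof -
  have "\<exists>A B. A \<subseteq> V \<and> B \<subseteq> V \<and> A \<inter> B = {} \<and> card A = biclique_num V E \<and>
      card B = biclique_num V E \<and> (\<forall>a\<in>A. \<forall>b\<in>B. {a, b} \<in> E)"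
    unfolding biclique_num_def
  proof (rule GreatestI_nat[where k = 0 and b = "card V"])
    show "\<exists>A B. A \<subseteq> V \<and> B \<subseteq> V \<and> A \<inter> B = {} \<and> card A = 0 \<and> card B = 0 \<and>
        (\<forall>a\<in>A. \<forall>b\<in>B. {a, b} \<in> E)"
      by (intro exI[of _ "{}"]) simp
  qed (rule biclique_size_le_card[OF assms])
  then obtain A B where "A \<subseteq> V" "B \<subseteq> V" "A \<inter> B = {}"
    "card A = biclique_num V E" "card B = biclique_num V E" "complete_between E A B"
    unfolding complete_between_def by blast
  then show ?thesis by (rule that)
qed

lemma card_le_biclique_num_if_complete:
  assumes "finite V" "P \<subseteq> V" "U \<subseteq> V" "P \<inter> U = {}" "complete_between E P U"
    and "biclique_num V E < card P"
  shows "card U \<le> biclique_num V E"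
proof (rule ccontr)
  let ?s = "biclique_num V E"
  assume "\<not> card U \<le> ?s"
  then obtain B where B: "B \<subseteq> U" "card B = Suc ?s"
    using obtain_subset_with_card_n[of "Suc ?s" U] by auto
  obtain A where A: "A \<subseteq> P" "card A = Suc ?s"
    using obtain_subset_with_card_n[of "Suc ?s" P] assms(6) by auto
  have "complete_between E A B" using assms(5) A(1) B(1) unfolding complete_between_def by blast
  moreover have "A \<subseteq> V" "B \<subseteq> V" "A \<inter> B = {}" using A(1) B(1) assms(2-4) by auto
  ultimately have "Suc ?s \<le> ?s" using biclique_num_ge[OF assms(1) _ _ _ A(2) B(2)] by blast
  then show False by simp
qed

lemma
  assumes "graph V E" "E \<noteq> {}"
  shows biclique_num_pos: "0 < biclique_num V E"
    and biclique_num_less_card: "biclique_num V E < card V"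
proof -
  have fin: "finite V" using assms(1) unfolding graph_def by simp
  obtain e where "e \<in> E" using assms(2) by blast
  then obtain a b where "e = {a, b}" "a \<noteq> b" "a \<in> V" "b \<in> V"
    using assms(1) unfolding graph_def by blast
  with \<open>e \<in> E\<close> have "{a} \<subseteq> V" "{b} \<subseteq> V" "{a} \<inter> {b} = {}" "card {a} = 1" "card {b} = 1"
    "complete_between E {a} {b}"
    unfolding complete_between_def by auto
  then have "1 \<le> biclique_num V E" by (rule biclique_num_ge[OF fin])
  then show pos: "0 < biclique_num V E" by simp
  obtain A B where AB: "A \<subseteq> V" "B \<subseteq> V" "A \<inter> B = {}"
      "card A = biclique_num V E" "card B = biclique_num V E"
    by (rule biclique_num_witness[OF fin, of E])
  have "finite A" "finite B" using AB(1,2) fin finite_subset by auto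
  then have "card (A \<union> B) = card A + card B" using AB(3) by (rule card_Un_disjoint)
  moreover have "card (A \<union> B) \<le> card V" using AB(1,2) fin by (intro card_mono) auto
  ultimately show "biclique_num V E < card V" using AB(4,5) pos by simp
qed

section \<open>Balls of a symmetric relation of bounded degree\<close>

fun reach :: "('b \<Rightarrow> 'b set) \<Rightarrow> 'b \<Rightarrow> nat \<Rightarrow> 'b set" where
  "reach N z 0 = {z}"
| "reach N z (Suc j) = reach N z j \<union> \<Union>(N ` reach N z j)"

declare reach.simps(2) [simp del]

lemma mem_reach_Suc: "Q \<in> reach N z (Suc j) \<longleftrightarrow> Q \<in> reach N z j \<or> (\<exists>P\<in>reach N z j. Q \<in> N P)"
  by (auto simp: reach.simps(2))

lemma reach_mono: "i \<le> j \<Longrightarrow> reach N z i \<subseteq> reach N z j"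
  by (induction j) (auto simp: le_Suc_eq mem_reach_Suc)

lemma reach_step: "P \<in> reach N z j \<Longrightarrow> Q \<in> N P \<Longrightarrow> Q \<in> reach N z (Suc j)"
  by (auto simp: mem_reach_Suc)

lemma finite_reach: "(\<And>P. finite (N P)) \<Longrightarrow> finite (reach N z j)"
  by (induction j) (auto simp: reach.simps(2))

lemma reach_subset:
  assumes "z \<in> A" "\<And>P. N P \<subseteq> A"
  shows "reach N z j \<subseteq> A"
proof (induction j)
  case (Suc j)
  then show ?case using assms(2) unfolding reach.simps(2) by blast
qed (simp add: assms(1))

context
  fixes N :: "'b \<Rightarrow> 'b set" and d :: nat
  assumes finite_N: "\<And>P. finite (N P)" and card_N: "\<And>P. card (N P) \<le> d"
    and sym_N: "\<And>P Q. Q \<in> N P \<Longrightarrow> P \<in> N Q"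
begin

text \<open>Each vertex first reached in step i+1 has a neighbour reached in step i, so it has at
  most d - 1 neighbours that are new in step i+2.\<close>
lemma card_reach_Suc_Suc_diff_le:
  "card (reach N z (Suc (Suc i)) - reach N z (Suc i))
    \<le> (d - 1) * card (reach N z (Suc i) - reach N z i)"
proof -
  let ?D = "reach N z (Suc i) - reach N z i"
  have sub: "reach N z (Suc (Suc i)) - reach N z (Suc i) \<subseteq> (\<Union>P\<in>?D. N P - reach N z (Suc i))"
  proof
    fix Q assume Q: "Q \<in> reach N z (Suc (Suc i)) - reach N z (Suc i)"
    then obtain P where P: "P \<in> reach N z (Suc i)" "Q \<in> N P" by (auto simp: mem_reach_Suc)
    have "P \<notin> reach N z i" using Q reach_step[of P N z i Q] P(2) by blast
    then show "Q \<in> (\<Union>P\<in>?D. N P - reach N z (Suc i))" using P Q by blast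
  qed
  have each: "card (N P - reach N z (Suc i)) \<le> d - 1" if P: "P \<in> ?D" for P
  proof -
    obtain P' where P': "P' \<in> reach N z i" "P \<in> N P'" using P by (auto simp: mem_reach_Suc)
    then have "P' \<in> N P \<inter> reach N z (Suc i)" using sym_N by (auto simp: mem_reach_Suc)
    then have "card (N P - reach N z (Suc i)) < card (N P)"
      using finite_N by (intro psubset_card_mono) auto
    then show ?thesis using card_N[of P] by simp
  qed
  have "finite ?D" using finite_reach[of N z "Suc i", OF finite_N] by simp
  have "card (reach N z (Suc (Suc i)) - reach N z (Suc i))
      \<le> card (\<Union>P\<in>?D. N P - reach N z (Suc i))"
    using \<open>finite ?D\<close> finite_N sub by (intro card_mono) auto
  also have "\<dots> \<le> (\<Sum>P\<in>?D. card (N P - reach N z (Suc i)))"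
    by (rule card_UN_le[OF \<open>finite ?D\<close>])
  also have "\<dots> \<le> (\<Sum>P\<in>?D. d - 1)"
    using each by (rule sum_mono)
  finally show ?thesis by (simp add: mult.commute)
qed

lemma card_reach_Suc_diff_le: "card (reach N z (Suc i) - reach N z i) \<le> d * (d - 1) ^ i"
proof (induction i)
  case 0
  have "reach N z (Suc 0) - reach N z 0 \<subseteq> N z" by (auto simp: mem_reach_Suc)
  then have "card (reach N z (Suc 0) - reach N z 0) \<le> card (N z)" by (rule card_mono[OF finite_N])
  then show ?case using card_N[of z] by simp
next
  case (Suc i)
  then show ?case
    using card_reach_Suc_Suc_diff_le[of z i] mult_le_mono2[OF Suc.IH, of "d - 1"]
    by (simp add: algebra_simps)
qed

lemma card_reach_le: "card (reach N z j) \<le> 1 + d * (\<Sum>i<j. (d - 1) ^ i)"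
proof (induction j)
  case 0
  then show ?case by simp
next
  case (Suc j)
  have sub: "reach N z j \<subseteq> reach N z (Suc j)" by (rule reach_mono) simp
  have fin: "finite (reach N z j)" "finite (reach N z (Suc j))"
    using finite_reach[of N, OF finite_N] by auto
  have "card (reach N z (Suc j) - reach N z j) = card (reach N z (Suc j)) - card (reach N z j)"
    by (rule card_Diff_subset[OF fin(1) sub])
  moreover have "card (reach N z j) \<le> card (reach N z (Suc j))" by (rule card_mono[OF fin(2) sub])
  ultimately have
    "card (reach N z (Suc j)) = card (reach N z j) + card (reach N z (Suc j) - reach N z j)"
    by simp
  then show ?case using Suc.IH card_reach_Suc_diff_le[of z j] by (simp add: algebra_simps)
qed

end

section \<open>Red balls in a trigraph\<close>

definition red_nbrs :: "'a trigraph \<Rightarrow> 'a set \<Rightarrow> 'a set set" where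
  "red_nbrs T P = {Q. {P, Q} \<in> tred T}"

definition black_nbhd :: "'a trigraph \<Rightarrow> 'a set \<Rightarrow> 'a set" where
  "black_nbhd T P = \<Union>{Q \<in> tvert T. {P, Q} \<in> tblack T}"

text \<open>The share of the strongly reachable vertices that a part Q of a red ball accounts for.\<close>
definition charged :: "nat \<Rightarrow> 'a trigraph \<Rightarrow> 'a set \<Rightarrow> 'a set" where
  "charged s T Q = (if s < card Q then black_nbhd T Q else Q)"

lemma red_nbrs_sym: "Q \<in> red_nbrs T P \<Longrightarrow> P \<in> red_nbrs T Q"
  unfolding red_nbrs_def by (simp add: insert_commute)

lemma
  assumes "represents V E T" "finite V"
  shows finite_red_nbrs: "finite (red_nbrs T P)"
    and card_red_nbrs_le_red_deg: "P \<in> tvert T \<Longrightarrow> card (red_nbrs T P) \<le> red_deg T P"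
proof -
  have inj: "inj_on (\<lambda>Q. {P, Q}) (red_nbrs T P)" by (rule inj_onI) (auto simp: doubleton_eq_iff)
  have sub: "(\<lambda>Q. {P, Q}) ` red_nbrs T P \<subseteq> {e \<in> tred T. P \<in> e}" unfolding red_nbrs_def by auto
  have fin: "finite {e \<in> tred T. P \<in> e}" using finite_tred[OF assms] by simp
  then show "finite (red_nbrs T P)" using finite_imageD[OF finite_subset[OF sub] inj] by blast
  show "card (red_nbrs T P) \<le> red_deg T P"
    unfolding red_deg_def using card_mono[OF fin sub] card_image[OF inj] by simp
qed

lemma red_nbrs_subset: "represents V E T \<Longrightarrow> red_nbrs T P \<subseteq> tvert T"
  unfolding red_nbrs_def using represents_edgeD by blast

lemma red_nbrs_empty: "represents V E T \<Longrightarrow> P \<notin> tvert T \<Longrightarrow> red_nbrs T P = {}"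
  unfolding red_nbrs_def using represents_edgeD by blast

lemma charged_subset:
  assumes "represents V E T" "Q \<in> tvert T"
  shows "charged s T Q \<subseteq> V"
proof -
  have "black_nbhd T Q \<subseteq> V" unfolding black_nbhd_def using represents_part[OF assms(1)] by blast
  then show ?thesis unfolding charged_def using represents_part[OF assms] by simp
qed

context
  fixes V :: "'a set" and E :: "'a set set" and T :: "'a trigraph"
  assumes T: "represents V E T" and finite_V: "finite V"
begin

lemma card_le_biclique_num_if_black:
  assumes "{P, Q} \<in> tblack T" "biclique_num V E < card P"
  shows "card Q \<le> biclique_num V E"
proof -
  have PQ: "P \<in> tvert T" "Q \<in> tvert T" "P \<noteq> Q" using represents_edgeD[OF T] assms(1) by blast+
  show ?thesis
  proof (rule card_le_biclique_num_if_complete[OF finite_V])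
    show "P \<subseteq> V" "Q \<subseteq> V" using represents_part[OF T] PQ by blast+
    show "P \<inter> Q = {}" using represents_disjoint[OF T] PQ by blast
    show "complete_between E P Q" using represents_black_complete[OF T] assms(1) .
  qed (rule assms(2))
qed

lemma card_black_nbhd_le:
  assumes "P \<in> tvert T" "biclique_num V E < card P"
  shows "card (black_nbhd T P) \<le> biclique_num V E"
proof (rule card_le_biclique_num_if_complete[OF finite_V])
  show "P \<subseteq> V" using represents_part[OF T assms(1)] by blast
  show "black_nbhd T P \<subseteq> V" unfolding black_nbhd_def using represents_part[OF T] by blast
  show "P \<inter> black_nbhd T P = {}"
    unfolding black_nbhd_def
    using represents_disjoint[OF T] represents_edgeD[OF T] assms(1) by blast
  show "complete_between E P (black_nbhd T P)"
    unfolding black_nbhd_def complete_between_def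
    using represents_black_complete[OF T] unfolding complete_between_def by blast
qed (rule assms(2))

lemma card_charged_le:
  assumes "Q \<in> tvert T"
  shows "card (charged (biclique_num V E) T Q) \<le> biclique_num V E"
  using card_black_nbhd_le[OF assms] unfolding charged_def by simp

lemma red_nbr_if_large_parts_adjacent:
  assumes "{a, b} \<in> E" "a \<in> V" "b \<in> V" "part_of T a \<noteq> part_of T b"
    and "biclique_num V E < card (part_of T a)" "biclique_num V E < card (part_of T b)"
  shows "part_of T b \<in> red_nbrs T (part_of T a)"
proof -
  have "adjacent_between E (part_of T a) (part_of T b)"
    unfolding adjacent_between_def using in_part_of[OF T] assms(1-3) by blast
  then have "{part_of T a, part_of T b} \<in> tblack T \<union> tred T"
    using represents_adjacent[OF T] part_of_in_tvert[OF T] assms(2-4) by blast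
  moreover have "{part_of T a, part_of T b} \<notin> tblack T"
    using card_le_biclique_num_if_black assms(5,6) by fastforce
  ultimately show ?thesis unfolding red_nbrs_def by blast
qed

text \<open>No black edge joins two large parts, so a path through large parts moves along red
  edges of T.\<close>
lemma part_of_path_in_reach:
  assumes "is_path V E ps" "i < length ps"
    and "\<And>j. j \<le> i \<Longrightarrow> biclique_num V E < card (part_of T (ps ! j))"
  shows "part_of T (ps ! i) \<in> reach (red_nbrs T) (part_of T (ps ! 0)) i"
  using assms(2,3)
proof (induction i)
  case 0
  then show ?case by simp
next
  case (Suc i)
  then have IH: "part_of T (ps ! i) \<in> reach (red_nbrs T) (part_of T (ps ! 0)) i" by simp
  show ?case
  proof (cases "part_of T (ps ! i) = part_of T (ps ! Suc i)")
    case True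
    have "reach (red_nbrs T) (part_of T (ps ! 0)) i
        \<subseteq> reach (red_nbrs T) (part_of T (ps ! 0)) (Suc i)"
      by (rule reach_mono) simp
    then show ?thesis using IH True by auto
  next
    case False
    have "ps ! i \<in> V" "ps ! Suc i \<in> V" "{ps ! i, ps ! Suc i} \<in> E"
      using assms(1) Suc.prems(1) unfolding is_path_def by (auto dest: nth_mem)
    then have "part_of T (ps ! Suc i) \<in> red_nbrs T (part_of T (ps ! i))"
      using red_nbr_if_large_parts_adjacent False Suc.prems(2) by simp
    then show ?thesis using reach_step[OF IH] by blast
  qed
qed

lemma path_end_in_charged:
  assumes "is_path V E ps" "m = length ps - 1" "0 < m" "m \<le> r"
    and "\<And>j. j < m \<Longrightarrow> biclique_num V E < card (part_of T (ps ! j))"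
    and "card (part_of T (ps ! m)) \<le> biclique_num V E"
  shows "ps ! m \<in> \<Union>(charged (biclique_num V E) T ` reach (red_nbrs T) (part_of T (ps ! 0)) r)"
proof -
  let ?s = "biclique_num V E" and ?R = "reach (red_nbrs T) (part_of T (ps ! 0))"
  define P where "P = part_of T (ps ! (m - 1))"
  define Q where "Q = part_of T (ps ! m)"
  have m: "length ps = Suc m" using assms(1-3) unfolding is_path_def by simp
  have "Suc (m - 1) < length ps" "Suc (m - 1) = m" using assms(3) m by simp_all
  then have V: "ps ! (m - 1) \<in> V" "ps ! m \<in> V" "{ps ! (m - 1), ps ! m} \<in> E"
    using assms(1) unfolding is_path_def by (metis Suc_lessD nth_mem subsetD)+
  have P_large: "?s < card P" using assms(3,5) unfolding P_def by simp
  have "P \<in> ?R (m - 1)" unfolding P_def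
    using assms(3,5) m by (intro part_of_path_in_reach[OF assms(1)]) auto
  moreover have "m - 1 \<le> r" using assms(4) by simp
  ultimately have P_reach: "P \<in> ?R r" using reach_mono by (metis subsetD)
  have "P \<noteq> Q" using P_large assms(6) unfolding Q_def by auto
  then have "adjacent_between E P Q"
    unfolding adjacent_between_def P_def Q_def using in_part_of[OF T] V by blast
  then have "{P, Q} \<in> tblack T \<union> tred T"
    using represents_adjacent[OF T] part_of_in_tvert[OF T] V \<open>P \<noteq> Q\<close> unfolding P_def Q_def by blast
  then consider "{P, Q} \<in> tblack T" | "Q \<in> red_nbrs T P" unfolding red_nbrs_def by blast
  then show ?thesis
  proof cases
    case 1
    then have "ps ! m \<in> black_nbhd T P"
      unfolding black_nbhd_def Q_def using part_of_in_tvert[OF T] in_part_of[OF T] V(2) by blast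
    then show ?thesis using P_reach P_large unfolding charged_def by auto
  next
    case 2
    then have "Q \<in> ?R (Suc (m - 1))" by (rule reach_step[OF \<open>P \<in> ?R (m - 1)\<close>])
    moreover have "Suc (m - 1) \<le> r" using assms(3,4) by simp
    ultimately have "Q \<in> ?R r" using reach_mono by (metis subsetD)
    moreover have "ps ! m \<in> charged ?s T Q"
      unfolding charged_def Q_def using assms(6) in_part_of[OF T] V(2) by simp
    ultimately show ?thesis by blast
  qed
qed

lemma card_charged_reach_le:
  assumes "z \<in> tvert T" and red_deg: "\<And>P. P \<in> tvert T \<Longrightarrow> red_deg T P \<le> d"
  shows "card (\<Union>(charged (biclique_num V E) T ` reach (red_nbrs T) z r))
    \<le> (1 + d * (\<Sum>i<r. (d - 1) ^ i)) * biclique_num V E"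
proof -
  let ?s = "biclique_num V E" and ?R = "reach (red_nbrs T) z r"
  have finite_N: "finite (red_nbrs T P)" for P by (rule finite_red_nbrs[OF T finite_V])
  have card_N: "card (red_nbrs T P) \<le> d" for P
  proof (cases "P \<in> tvert T")
    case True
    then show ?thesis
      using card_red_nbrs_le_red_deg[OF T finite_V True] red_deg[OF True] by linarith
  next
    case False
    then show ?thesis using red_nbrs_empty[OF T] by simp
  qed
  have R_sub: "?R \<subseteq> tvert T" using reach_subset[OF assms(1) red_nbrs_subset[OF T]] .
  have fin_R: "finite ?R" by (rule finite_reach[OF finite_N])
  have "card (\<Union>(charged ?s T ` ?R)) \<le> (\<Sum>Q\<in>?R. card (charged ?s T Q))"
    by (rule card_UN_le[OF fin_R])
  also have "\<dots> \<le> (\<Sum>Q\<in>?R. ?s)"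
    using R_sub card_charged_le by (intro sum_mono) blast
  also have "\<dots> = card ?R * ?s" by simp
  also have "\<dots> \<le> (1 + d * (\<Sum>i<r. (d - 1) ^ i)) * ?s"
    using card_reach_le[of "red_nbrs T" d z r, OF finite_N card_N red_nbrs_sym]
    by (rule mult_le_mono1)
  finally show ?thesis .
qed

end

section \<open>Strong reachability along a contraction sequence\<close>

lemma card_newly_large_le:
  assumes T: "represents V E T" and "finite V" "x \<in> tvert T" "y \<in> tvert T" "x \<noteq> y"
  shows "card {w \<in> V. card (part_of T w) \<le> s \<and> s < card (part_of (contract T x y) w)} \<le> 2 * s"
proof -
  let ?small = "\<lambda>P. if card P \<le> s then P else {}"
  have "{w \<in> V. card (part_of T w) \<le> s \<and> s < card (part_of (contract T x y) w)}
      \<subseteq> ?small x \<union> ?small y"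
  proof
    fix w assume w: "w \<in> {w \<in> V. card (part_of T w) \<le> s \<and> s < card (part_of (contract T x y) w)}"
    then have "part_of T w \<in> {x, y}"
      using part_of_contract[OF assms(1,3-5)] by (auto split: if_splits)
    then show "w \<in> ?small x \<union> ?small y" using w in_part_of[OF T] by auto
  qed
  moreover have "finite (?small x)" "finite (?small y)"
    using represents_part[OF T] assms(2-4) finite_subset by auto
  ultimately have "card {w \<in> V. card (part_of T w) \<le> s \<and> s < card (part_of (contract T x y) w)}
      \<le> card (?small x \<union> ?small y)"
    by (intro card_mono) auto
  also have "\<dots> \<le> card (?small x) + card (?small y)" by (rule card_Un_le)
  also have "\<dots> \<le> 2 * s" by simp
  finally show ?thesis .
qed

lemma ord_less_imp_ord_le: "ord_less L u v \<Longrightarrow> ord_le L u v"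
  unfolding ord_less_def ord_le_def by (blast intro: less_imp_le)

lemma linord_antimono_exists:
  fixes f :: "'a \<Rightarrow> 'b::linorder"
  assumes "finite V"
  shows "\<exists>L. linord V L \<and> (\<forall>u v. ord_le L u v \<longrightarrow> f v \<le> f u)"
proof -
  obtain xs where xs: "set xs = V" "distinct xs" using finite_distinct_list[OF assms] by blast
  define L where "L = rev (sort_key f xs)"
  have sorted: "sorted_wrt (\<lambda>a b. f b \<le> f a) L"
    unfolding L_def sorted_wrt_rev using sorted_sort_key[of f xs] unfolding sorted_map .
  have "f v \<le> f u" if uv: "ord_le L u v" for u v
  proof -
    obtain i j where ij: "i \<le> j" "j < length L" "L ! i = u" "L ! j = v"
      using uv unfolding ord_le_def by blast
    show ?thesis
    proof (cases "i = j")
      case True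
      then show ?thesis using ij by auto
    next
      case False
      then have "f (L ! j) \<le> f (L ! i)" using sorted_wrt_nth_less[OF sorted, of i j] ij by simp
      then show ?thesis using ij by simp
    qed
  qed
  moreover have "linord V L" unfolding linord_def L_def using xs by simp
  ultimately show ?thesis by blast
qed

lemma scol_le:
  assumes "finite V" "V \<noteq> {}" "linord V L" "\<And>v. v \<in> V \<Longrightarrow> card (Sreach V E r L v) \<le> B"
  shows "scol V E r \<le> B"
proof -
  let ?M = "\<lambda>L. Max ((\<lambda>v. card (Sreach V E r L v)) ` V)"
  have "?M L' \<le> card V" for L'
  proof (rule Max.boundedI)
    show "c \<le> card V" if "c \<in> (\<lambda>v. card (Sreach V E r L' v)) ` V" for c
      using that assms(1) unfolding Sreach_def by (auto intro: card_mono)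
  qed (use assms(1,2) in simp_all)
  then have "{?M L' | L'. linord V L'} \<subseteq> {..card V}" by auto
  then have "finite {?M L' | L'. linord V L'}" by (rule finite_subset) simp
  moreover have "?M L \<in> {?M L' | L'. linord V L'}" using assms(3) by blast
  ultimately have "scol V E r \<le> ?M L" unfolding scol_def by (rule Min_le)
  also have "\<dots> \<le> B" by (rule Max.boundedI) (use assms in auto)
  finally show ?thesis .
qed

locale contraction_sequence =
  fixes V :: "'a set" and E :: "'a set set" and d :: nat and S :: "'a trigraph list"
  assumes graph: "graph V E" and edges_nonempty: "E \<noteq> {}" and seq: "contraction_seq V E d S"
begin

lemma finite_V: "finite V"
  using graph unfolding graph_def by simp

lemma
  shows S_nonempty: "S \<noteq> []" and S_0: "S ! 0 = initial_trigraph V E"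
    and S_chain: "contraction_chain S" and card_tvert_last: "card (tvert (last S)) = 1"
    and red_deg_S: "T \<in> set S \<Longrightarrow> P \<in> tvert T \<Longrightarrow> red_deg T P \<le> d"
  using seq unfolding contraction_seq_iff by auto

lemma S_Suc:
  assumes "Suc k < length S"
  obtains x y where "x \<in> tvert (S ! k)" "y \<in> tvert (S ! k)" "x \<noteq> y"
    "S ! Suc k = contract (S ! k) x y"
  using S_chain assms unfolding contraction_chain_def by blast

lemma represents_S: "k < length S \<Longrightarrow> represents V E (S ! k)"
proof (induction k)
  case 0
  then show ?case using represents_initial[OF graph] S_0 by simp
next
  case (Suc k)
  obtain x y where "x \<in> tvert (S ! k)" "y \<in> tvert (S ! k)" "x \<noteq> y"
    "S ! Suc k = contract (S ! k) x y"
    using Suc.prems by (rule S_Suc)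
  then show ?case using represents_contract Suc by simp
qed

lemma part_of_S_mono:
  assumes "i \<le> j" "j < length S" "v \<in> V"
  shows "part_of (S ! i) v \<subseteq> part_of (S ! j) v"
  using assms(1,2)
proof (induction j rule: dec_induct)
  case (step j)
  obtain x y where xy: "x \<in> tvert (S ! j)" "y \<in> tvert (S ! j)" "x \<noteq> y"
      "S ! Suc j = contract (S ! j) x y"
    using step.prems by (rule S_Suc)
  have "part_of (S ! j) v \<subseteq> part_of (S ! Suc j) v"
    using part_of_contract[OF represents_S xy(1-3) assms(3)] step(4) xy(4) by auto
  then show ?case using step by auto
qed simp

lemma part_of_S_0: "v \<in> V \<Longrightarrow> part_of (S ! 0) v = {v}"
  using part_of_eq[OF represents_S[of 0]] S_nonempty S_0
  by (simp add: initial_trigraph_def tvert_def)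

lemma part_of_S_last:
  assumes v: "v \<in> V"
  shows "part_of (S ! (length S - 1)) v = V"
proof -
  have T: "represents V E (S ! (length S - 1))" using represents_S S_nonempty by simp
  obtain P where "tvert (S ! (length S - 1)) = {P}"
    using card_tvert_last S_nonempty by (metis card_1_singletonE last_conv_nth)
  moreover from this have "P = V" using represents_Union[OF T] by simp
  ultimately show ?thesis using part_of_eq[OF T] v by simp
qed

text \<open>The vertices are ordered by decreasing large_from, the time at which the part of a
  vertex first has more than s vertices. All parts are large at the end, where V is the only
  part and s < card V.\<close>
definition large_from :: "'a \<Rightarrow> nat" where
  "large_from v = (LEAST k. biclique_num V E < card (part_of (S ! k) v))"

lemma large_at_last: "v \<in> V \<Longrightarrow> biclique_num V E < card (part_of (S ! (length S - 1)) v)"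
  using part_of_S_last biclique_num_less_card[OF graph edges_nonempty] by simp

lemma large_at_large_from:
  assumes "v \<in> V"
  shows "biclique_num V E < card (part_of (S ! large_from v) v)"
  unfolding large_from_def
  by (rule LeastI[where P = "\<lambda>k. biclique_num V E < card (part_of (S ! k) v)",
        OF large_at_last[OF assms]])

lemma large_from_less_length:
  assumes "v \<in> V"
  shows "large_from v < length S"
proof -
  have "large_from v \<le> length S - 1"
    unfolding large_from_def
    by (rule Least_le[where P = "\<lambda>k. biclique_num V E < card (part_of (S ! k) v)",
          OF large_at_last[OF assms]])
  then show ?thesis using S_nonempty by (cases S) auto
qed

lemma large_iff_large_from_le:
  assumes "v \<in> V" "k < length S"
  shows "biclique_num V E < card (part_of (S ! k) v) \<longleftrightarrow> large_from v \<le> k"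
proof
  assume "biclique_num V E < card (part_of (S ! k) v)"
  then show "large_from v \<le> k" unfolding large_from_def by (rule Least_le)
next
  assume le: "large_from v \<le> k"
  have "biclique_num V E < card (part_of (S ! large_from v) v)"
    by (rule large_at_large_from[OF assms(1)])
  also have "\<dots> \<le> card (part_of (S ! k) v)"
    using part_of_S_mono[OF le assms(2,1)] finite_V represents_part[OF represents_S[OF assms(2)]]
      part_of_in_tvert[OF represents_S[OF assms(2)] assms(1)]
    by (meson card_mono finite_subset)
  finally show "biclique_num V E < card (part_of (S ! k) v)" .
qed

lemma large_from_pos: "v \<in> V \<Longrightarrow> 0 < large_from v"
  using large_iff_large_from_le[of v 0] part_of_S_0 biclique_num_pos[OF graph edges_nonempty]
    S_nonempty by fastforce

lemma card_large_from_eq_le: "card {w \<in> V. large_from w = k} \<le> 2 * biclique_num V E"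
proof (cases "0 < k \<and> k < length S")
  case True
  then obtain k' where k: "k = Suc k'" "Suc k' < length S" by (metis Suc_pred)
  then obtain x y where xy: "x \<in> tvert (S ! k')" "y \<in> tvert (S ! k')" "x \<noteq> y"
      "S ! k = contract (S ! k') x y"
    using S_Suc by metis
  let ?s = "biclique_num V E"
  let ?N = "{w \<in> V. card (part_of (S ! k') w) \<le> ?s \<and> ?s < card (part_of (contract (S ! k') x y) w)}"
  have "{w \<in> V. large_from w = k} \<subseteq> ?N"
  proof
    fix w assume w: "w \<in> {w \<in> V. large_from w = k}"
    then have "\<not> ?s < card (part_of (S ! k') w)" "?s < card (part_of (S ! k) w)"
      using large_iff_large_from_le[of w k'] large_iff_large_from_le[of w k] k by auto
    then show "w \<in> ?N" using w xy(4) by simp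
  qed
  moreover have "finite ?N" using finite_V by simp
  ultimately have "card {w \<in> V. large_from w = k} \<le> card ?N" by (rule card_mono[rotated])
  also have "\<dots> \<le> 2 * ?s"
    using card_newly_large_le[OF represents_S[of k'] finite_V xy(1-3), of ?s] k(2) by simp
  finally show ?thesis .
next
  case False
  then have "{w \<in> V. large_from w = k} = {}"
    using large_from_pos large_from_less_length by fastforce
  then show ?thesis unfolding \<open>{w \<in> V. large_from w = k} = {}\<close> by simp
qed

lemma Sreach_subset:
  assumes L: "\<And>u w. ord_le L u w \<Longrightarrow> large_from w \<le> large_from u" and v: "v \<in> V"
  defines "T \<equiv> S ! large_from v"
  shows "Sreach V E r L v \<subseteq> {w \<in> V. large_from w = large_from v} \<union>
    \<Union>(charged (biclique_num V E) T ` reach (red_nbrs T) (part_of T v) r)"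
proof
  let ?s = "biclique_num V E" and ?k = "large_from v"
  have k: "?k < length S" by (rule large_from_less_length[OF v])
  have T: "represents V E T" unfolding T_def using represents_S[OF k] .
  have large_T: "?s < card (part_of T w) \<longleftrightarrow> large_from w \<le> ?k" if "w \<in> V" for w
    unfolding T_def using large_iff_large_from_le[OF that k] .
  fix u assume "u \<in> Sreach V E r L v"
  then obtain ps where u: "u \<in> V" "ord_le L u v" and ps: "is_path V E ps" "hd ps = v" "last ps = u"
      "length ps - 1 \<le> r" "\<And>i. 0 < i \<and> i < length ps - 1 \<Longrightarrow> ord_less L v (ps ! i)"
    unfolding Sreach_def by blast
  show "u \<in> {w \<in> V. large_from w = ?k} \<union> \<Union>(charged ?s T ` reach (red_nbrs T) (part_of T v) r)"
  proof (cases "large_from u \<le> ?k")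
    case True
    then show ?thesis using L[OF u(2)] u(1) by simp
  next
    case False
    define m where "m = length ps - 1"
    have ps_nonempty: "ps \<noteq> []" and set_ps: "set ps \<subseteq> V" using ps(1) unfolding is_path_def by auto
    have ps_0: "ps ! 0 = v" and ps_m: "ps ! m = u"
      using ps(2,3) ps_nonempty unfolding m_def by (simp_all add: hd_conv_nth last_conv_nth)
    have small: "card (part_of T (ps ! m)) \<le> ?s" using large_T[OF u(1)] False ps_m by simp
    have "v \<noteq> u" using small large_T[OF v] ps_m by auto
    then have "0 < m" using ps_0 ps_m by (cases m) auto
    have large: "?s < card (part_of T (ps ! j))" if j: "j < m" for j
    proof -
      have "j < length ps" using j unfolding m_def by simp
      then have "ps ! j \<in> V" using set_ps nth_mem by blast
      moreover have "large_from (ps ! j) \<le> ?k"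
      proof (cases "j = 0")
        case False
        then have "ord_less L v (ps ! j)" using ps(5) j unfolding m_def by simp
        then show ?thesis by (rule L[OF ord_less_imp_ord_le])
      qed (simp add: ps_0)
      ultimately show ?thesis using large_T[of "ps ! j"] by simp
    qed
    have "ps ! m \<in> \<Union>(charged ?s T ` reach (red_nbrs T) (part_of T (ps ! 0)) r)"
      using ps(4) unfolding m_def[symmetric]
      by (intro path_end_in_charged[OF T finite_V ps(1) m_def \<open>0 < m\<close> _ large small])
    then show ?thesis using ps_0 ps_m by simp
  qed
qed

lemma card_Sreach_le:
  assumes "\<And>u w. ord_le L u w \<Longrightarrow> large_from w \<le> large_from u" and v: "v \<in> V"
  shows "card (Sreach V E r L v) \<le> (3 + d * (\<Sum>i<r. (d - 1) ^ i)) * biclique_num V E"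
proof -
  let ?s = "biclique_num V E" and ?k = "large_from v"
  define T where "T = S ! ?k"
  let ?C = "\<Union>(charged ?s T ` reach (red_nbrs T) (part_of T v) r)"
  have k: "?k < length S" by (rule large_from_less_length[OF v])
  have T: "represents V E T" unfolding T_def using represents_S[OF k] .
  have C_bound: "card ?C \<le> (1 + d * (\<Sum>i<r. (d - 1) ^ i)) * ?s"
  proof (rule card_charged_reach_le[OF T finite_V])
    show "part_of T v \<in> tvert T" by (rule part_of_in_tvert[OF T v])
    show "red_deg T P \<le> d" if "P \<in> tvert T" for P
      using red_deg_S that k unfolding T_def by simp
  qed
  have C_finite: "finite ?C"
  proof (rule finite_subset[OF _ finite_V])
    have "reach (red_nbrs T) (part_of T v) r \<subseteq> tvert T"
      by (rule reach_subset[OF part_of_in_tvert[OF T v] red_nbrs_subset[OF T]])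
    then show "?C \<subseteq> V" using charged_subset[OF T] by blast
  qed
  have "card (Sreach V E r L v) \<le> card ({w \<in> V. large_from w = ?k} \<union> ?C)"
    using Sreach_subset[OF assms, where r = r, folded T_def] finite_V C_finite
    by (intro card_mono) auto
  also have "\<dots> \<le> card {w \<in> V. large_from w = ?k} + card ?C" by (rule card_Un_le)
  finally show ?thesis using card_large_from_eq_le[of ?k] C_bound by (simp add: algebra_simps)
qed

lemma scol_le_contraction_seq: "scol V E r \<le> (3 + d * (\<Sum>i<r. (d - 1) ^ i)) * biclique_num V E"
proof -
  obtain L where "linord V L" "\<And>u w. ord_le L u w \<Longrightarrow> large_from w \<le> large_from u"
    using linord_antimono_exists[OF finite_V, of large_from] by blast
  moreover have "V \<noteq> {}" using graph edges_nonempty unfolding graph_def by blast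
  ultimately show ?thesis by (intro scol_le[OF finite_V] card_Sreach_le)
qed

end

lemma sum_pred_power_le:
  fixes x :: "'a::linordered_idom"
  assumes "1 \<le> x"
  shows "(\<Sum>i<Suc n. (x - 1) ^ i) \<le> x ^ n"
proof (induction n)
  case 0
  then show ?case by simp
next
  case (Suc n)
  have "(x - 1) ^ n \<le> x ^ n" using assms by (intro power_mono) auto
  then have "(x - 1) * (x - 1) ^ n \<le> (x - 1) * x ^ n" using assms by (intro mult_left_mono) auto
  then have "(\<Sum>i<Suc (Suc n). (x - 1) ^ i) \<le> x ^ n + (x - 1) * x ^ n" using Suc.IH by simp
  also have "\<dots> = x ^ Suc n" by (simp add: algebra_simps)
  finally show ?case .
qed

lemma mult_sum_pred_power_le:
  fixes x :: int
  assumes "0 \<le> x" "1 \<le> r"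
  shows "x * (\<Sum>i<r. (x - 1) ^ i) \<le> x ^ r"
proof (cases "x = 0")
  case True
  then show ?thesis using assms(2) by simp
next
  case False
  obtain n where r: "r = Suc n" using assms(2) by (cases r) auto
  have "x * (\<Sum>i<Suc n. (x - 1) ^ i) \<le> x * x ^ n"
    using sum_pred_power_le[of x n] False assms(1) by (intro mult_left_mono) auto
  then show ?thesis unfolding r by simp
qed

lemma of_nat_mult_sum_pred_power:
  "(of_nat (d * (\<Sum>i<r. (d - 1) ^ i)) :: 'a::comm_ring_1) = of_nat d * (\<Sum>i<r. (of_nat d - 1) ^ i)"
  by (cases d) (simp_all add: of_nat_sum algebra_simps)

theorem theorem2:
  fixes V :: "'a set" and E :: "'a set set" and r :: nat
  assumes "graph V E" and "E \<noteq> {}" and "r \<ge> 1"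
  shows "int (scol V E r)
           \<le> (3 + int (tww V E) * (\<Sum>i<r. (int (tww V E) - 1) ^ i)) * int (biclique_num V E)
       \<and> (3 + int (tww V E) * (\<Sum>i<r. (int (tww V E) - 1) ^ i)) * int (biclique_num V E)
           \<le> (int (tww V E) ^ r + 3) * int (biclique_num V E)"
proof
  let ?d = "tww V E" and ?s = "biclique_num V E"
  have "V \<noteq> {}" using assms(1,2) unfolding graph_def by blast
  then obtain S where "contraction_seq V E ?d S" using tww_contraction_seq[OF assms(1)] by blast
  then interpret contraction_sequence V E ?d S using assms(1,2) by unfold_locales
  have "scol V E r \<le> (3 + ?d * (\<Sum>i<r. (?d - 1) ^ i)) * ?s" by (rule scol_le_contraction_seq)
  then have "int (scol V E r) \<le> int ((3 + ?d * (\<Sum>i<r. (?d - 1) ^ i)) * ?s)" by (rule of_nat_mono)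
  then show "int (scol V E r) \<le> (3 + int ?d * (\<Sum>i<r. (int ?d - 1) ^ i)) * int ?s"
    by (simp only: of_nat_mult of_nat_add of_nat_numeral of_nat_mult_sum_pred_power[symmetric])
  have "int ?d * (\<Sum>i<r. (int ?d - 1) ^ i) \<le> int ?d ^ r"
    using mult_sum_pred_power_le[of "int ?d" r] assms(3) by simp
  then show "(3 + int ?d * (\<Sum>i<r. (int ?d - 1) ^ i)) * int ?s \<le> (int ?d ^ r + 3) * int ?s"
    by (intro mult_right_mono) auto
qed

end
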